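(* Let $G$ be a finite, simple, connected graph with $res_{wt}(G)=k$. Then the maximum degree of $G$ satisfies $\Delta(G)\le 2^{k-1}+k-1$.
   Context: $d(x,y)$ is the shortest-path distance. A set $W\subseteq V(G)$ is a resolving set if for every two distinct vertices $y,z$ there is $x\in W$ with $d(y,x)\ne d(z,x)$. A set $W$ is a weak total resolving set (WTR-set) if $W$ is resolving and, for every $w\in W$ and every $x\in V(G)\setminus W$, there is $w'\in W\setminus\{w\}$ with $d(x,w')\ne d(w,w')$. The weak total resolving number $res_{wt}(G)$ is the minimum positive integer $r$ such that every set of $r$ vertices of $G$ is a WTR-set for $G$. *)

theory Defs
  imports Main
begin

definition simple_graph :: "'a set \<Rightarrow> ('a \<Rightarrow> 'a \<Rightarrow> bool) \<Rightarrow> bool" where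
  "simple_graph V E \<longleftrightarrow> finite V \<and> V \<noteq> {} \<and>
     (\<forall>x y. E x y \<longrightarrow> x \<in> V \<and> y \<in> V) \<and>
     (\<forall>x y. E x y \<longrightarrow> E y x) \<and> (\<forall>x. \<not> E x x)"

fun walk :: "('a \<Rightarrow> 'a \<Rightarrow> bool) \<Rightarrow> 'a list \<Rightarrow> bool" where
  "walk E [] = True"
| "walk E [x] = True"
| "walk E (x # y # xs) = (E x y \<and> walk E (y # xs))"

definition walk_of_len :: "'a set \<Rightarrow> ('a \<Rightarrow> 'a \<Rightarrow> bool) \<Rightarrow> 'a \<Rightarrow> 'a \<Rightarrow> nat \<Rightarrow> bool" where
  "walk_of_len V E x y n \<longleftrightarrow> (\<exists>xs. xs \<noteq> [] \<and> hd xs = x \<and> last xs = y \<and> set xs \<subseteq> V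
      \<and> walk E xs \<and> length xs = Suc n)"

definition connected_graph :: "'a set \<Rightarrow> ('a \<Rightarrow> 'a \<Rightarrow> bool) \<Rightarrow> bool" where
  "connected_graph V E \<longleftrightarrow> (\<forall>x\<in>V. \<forall>y\<in>V. \<exists>n. walk_of_len V E x y n)"

definition gdist :: "'a set \<Rightarrow> ('a \<Rightarrow> 'a \<Rightarrow> bool) \<Rightarrow> 'a \<Rightarrow> 'a \<Rightarrow> nat" where
  "gdist V E x y = (LEAST n. walk_of_len V E x y n)"

definition resolving_set :: "'a set \<Rightarrow> ('a \<Rightarrow> 'a \<Rightarrow> bool) \<Rightarrow> 'a set \<Rightarrow> bool" where
  "resolving_set V E W \<longleftrightarrow> W \<subseteq> V \<and>
     (\<forall>y\<in>V. \<forall>z\<in>V. y \<noteq> z \<longrightarrow> (\<exists>x\<in>W. gdist V E y x \<noteq> gdist V E z x))"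

definition wtr_set :: "'a set \<Rightarrow> ('a \<Rightarrow> 'a \<Rightarrow> bool) \<Rightarrow> 'a set \<Rightarrow> bool" where
  "wtr_set V E W \<longleftrightarrow> resolving_set V E W \<and>
     (\<forall>w\<in>W. \<forall>x\<in>V - W. \<exists>w'\<in>W - {w}. gdist V E x w' \<noteq> gdist V E w w')"

definition res_wt :: "'a set \<Rightarrow> ('a \<Rightarrow> 'a \<Rightarrow> bool) \<Rightarrow> nat" where
  "res_wt V E = (LEAST r. 0 < r \<and> (\<forall>W. W \<subseteq> V \<and> card W = r \<longrightarrow> wtr_set V E W))"

definition degree :: "'a set \<Rightarrow> ('a \<Rightarrow> 'a \<Rightarrow> bool) \<Rightarrow> 'a \<Rightarrow> nat" where
  "degree V E x = card {y\<in>V. E x y}"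

definition max_degree :: "'a set \<Rightarrow> ('a \<Rightarrow> 'a \<Rightarrow> bool) \<Rightarrow> nat" where
  "max_degree V E = Max (degree V E ` V)"

end

theory Submission
  imports Defs
begin

text \<open>
  Let \<open>v\<close> be a vertex of maximum degree and \<open>S\<close> a set of \<open>k - 1\<close> neighbours of \<open>v\<close>.
  Every other neighbour of \<open>v\<close> has distance 1 or 2 to each vertex of \<open>S\<close>, so its
  distances to \<open>S\<close> are determined by which vertices of \<open>S\<close> it is adjacent to. If
  \<open>v\<close> had more than \<open>2^(k-1) + k - 1\<close> neighbours, two neighbours \<open>u\<^sub>1, u\<^sub>2 \<notin> S\<close>
  would have the same neighbourhood in \<open>S\<close>; then \<open>S \<union> {u\<^sub>1}\<close> is a \<open>k\<close>-set that is
  not a WTR-set, because no vertex other than \<open>u\<^sub>1\<close> distinguishes \<open>u\<^sub>2\<close> from \<open>u\<^sub>1\<close>.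
  The paths through \<open>v\<close> witness all distances involved.
\<close>

lemma walk_of_len_0_imp_eq:
  assumes "walk_of_len V E x y 0"
  shows "x = y"
proof -
  from assms obtain xs where "xs \<noteq> []" "hd xs = x" "last xs = y" "length xs = Suc 0"
    unfolding walk_of_len_def by blast
  then show ?thesis by (cases xs) auto
qed

lemma walk_of_len_gdist:
  assumes "walk_of_len V E x y n"
  shows "walk_of_len V E x y (gdist V E x y)" and "gdist V E x y \<le> n"
  using assms unfolding gdist_def by (auto intro: LeastI Least_le)

lemma gdist_common_neighbour:
  assumes "simple_graph V E" "v \<in> V" "u \<in> V" "s \<in> V"
    and "E v u" "E v s" "u \<noteq> s"
  shows "gdist V E u s \<in> {1, 2}"
proof -
  have "E u v" using assms(1,5) unfolding simple_graph_def by blast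
  then have walk: "walk_of_len V E u s 2"
    unfolding walk_of_len_def using assms(2-4,6)
    by (intro exI[of _ "[u, v, s]"]) auto
  have "gdist V E u s \<noteq> 0"
    using walk_of_len_gdist(1)[OF walk] walk_of_len_0_imp_eq assms(7) by metis
  with walk_of_len_gdist(2)[OF walk] show ?thesis by auto
qed

lemma gdist_eq_if_same_adjacency:
  assumes "simple_graph V E" "v \<in> V" "u\<^sub>1 \<in> V" "u\<^sub>2 \<in> V" "s \<in> V"
    and "E v u\<^sub>1" "E v u\<^sub>2" "E v s" "u\<^sub>1 \<noteq> s" "u\<^sub>2 \<noteq> s"
    and "gdist V E u\<^sub>1 s = 1 \<longleftrightarrow> gdist V E u\<^sub>2 s = 1"
  shows "gdist V E u\<^sub>1 s = gdist V E u\<^sub>2 s"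
  using gdist_common_neighbour[of V E v u\<^sub>1 s] gdist_common_neighbour[of V E v u\<^sub>2 s] assms
  by auto

lemma not_wtr_set_if_undistinguished:
  assumes "u\<^sub>1 \<in> W" "u\<^sub>2 \<in> V - W"
    and "\<And>w. w \<in> W - {u\<^sub>1} \<Longrightarrow> gdist V E u\<^sub>2 w = gdist V E u\<^sub>1 w"
  shows "\<not> wtr_set V E W"
  using assms unfolding wtr_set_def by blast

lemma pigeonhole_Pow:
  assumes "finite S" "f ` R \<subseteq> Pow S" "card R > 2 ^ card S"
  obtains x y where "x \<in> R" "y \<in> R" "x \<noteq> y" "f x = f y"
proof -
  have "card (f ` R) \<le> 2 ^ card S"
    using card_mono[OF _ assms(2)] assms(1) by (simp add: card_Pow)
  with assms(3) have "\<not> inj_on f R" by (intro pigeonhole) simp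
  then show ?thesis using that unfolding inj_on_def by blast
qed

lemma res_wt_spec:
  assumes "finite V"
  shows "0 < res_wt V E"
    and "\<And>W. W \<subseteq> V \<Longrightarrow> card W = res_wt V E \<Longrightarrow> wtr_set V E W"
proof -
  let ?P = "\<lambda>r. 0 < r \<and> (\<forall>W. W \<subseteq> V \<and> card W = r \<longrightarrow> wtr_set V E W)"
  \<comment> \<open>vacuously true, so the \<open>LEAST\<close> in \<open>res_wt\<close> is attained\<close>
  have "?P (Suc (card V))"
    using card_mono[OF assms] by (metis not_less_eq_eq order.refl zero_less_Suc)
  then have "?P (res_wt V E)" unfolding res_wt_def by (rule LeastI)
  then show "0 < res_wt V E" "\<And>W. W \<subseteq> V \<Longrightarrow> card W = res_wt V E \<Longrightarrow> wtr_set V E W"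
    by auto
qed

lemma max_degree_attained:
  assumes "simple_graph V E"
  obtains v where "v \<in> V" "max_degree V E = degree V E v"
proof -
  have "finite V" "V \<noteq> {}" using assms unfolding simple_graph_def by auto
  then have "max_degree V E \<in> degree V E ` V"
    unfolding max_degree_def by (intro Max_in) auto
  then show ?thesis using that by blast
qed

lemma not_wtr_set_if_large_degree:
  assumes G: "simple_graph V E" and v: "v \<in> V" and deg: "degree V E v > 2 ^ m + m"
  obtains W where "W \<subseteq> V" "card W = Suc m" "\<not> wtr_set V E W"
proof -
  define N where "N = {y \<in> V. E v y}"
  have "finite N" using G unfolding simple_graph_def N_def by auto
  have card_N: "card N > 2 ^ m + m" using deg unfolding degree_def N_def .
  have "m \<le> card N" using card_N by linarith
  then obtain S where S: "S \<subseteq> N" "card S = m" and "finite S"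
    by (rule obtain_subset_with_card_n)
  let ?adj = "\<lambda>u. {s \<in> S. gdist V E u s = 1}"
  have "?adj ` (N - S) \<subseteq> Pow S" by blast
  moreover have "card (N - S) > 2 ^ card S"
    using card_N S \<open>finite S\<close> by (simp add: card_Diff_subset)
  ultimately obtain u\<^sub>1 u\<^sub>2
    where u: "u\<^sub>1 \<in> N - S" "u\<^sub>2 \<in> N - S" "u\<^sub>1 \<noteq> u\<^sub>2" "?adj u\<^sub>1 = ?adj u\<^sub>2"
    by (rule pigeonhole_Pow[OF \<open>finite S\<close>])
  define W where "W = insert u\<^sub>1 S"
  have "W \<subseteq> V" "card W = Suc m"
    using S u \<open>finite S\<close> unfolding W_def N_def by auto
  moreover have "\<not> wtr_set V E W"
  proof (rule not_wtr_set_if_undistinguished)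
    show "u\<^sub>1 \<in> W" "u\<^sub>2 \<in> V - W" using u unfolding W_def N_def by auto
    fix w assume "w \<in> W - {u\<^sub>1}"
    then have "w \<in> S" unfolding W_def by auto
    then have same_adj: "gdist V E u\<^sub>1 w = 1 \<longleftrightarrow> gdist V E u\<^sub>2 w = 1" using u(4) by blast
    have "u\<^sub>1 \<in> V" "u\<^sub>2 \<in> V" "E v u\<^sub>1" "E v u\<^sub>2" using u unfolding N_def by auto
    moreover have "w \<in> V" "E v w" using \<open>w \<in> S\<close> S(1) unfolding N_def by auto
    moreover have "u\<^sub>1 \<noteq> w" "u\<^sub>2 \<noteq> w" using \<open>w \<in> S\<close> u by auto
    ultimately show "gdist V E u\<^sub>2 w = gdist V E u\<^sub>1 w"
      using gdist_eq_if_same_adjacency[OF G v _ _ _ _ _ _ _ _ same_adj] by simp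
  qed
  ultimately show ?thesis using that by blast
qed

theorem theorem7:
  fixes V :: "'a set" and E :: "'a \<Rightarrow> 'a \<Rightarrow> bool" and k :: nat
  assumes "simple_graph V E"
    and "connected_graph V E"
    and "res_wt V E = k"
  shows "max_degree V E \<le> 2 ^ (k - 1) + k - 1"
proof (rule ccontr)
  assume "\<not> ?thesis"
  have "finite V" using assms(1) unfolding simple_graph_def by blast
  have "0 < k" and wtr: "\<And>W. W \<subseteq> V \<Longrightarrow> card W = k \<Longrightarrow> wtr_set V E W"
    using res_wt_spec[OF \<open>finite V\<close>, where E = E] assms(3) by auto
  obtain v where v: "v \<in> V" "max_degree V E = degree V E v"
    using max_degree_attained[OF assms(1)] .
  with \<open>\<not> ?thesis\<close> \<open>0 < k\<close> have "degree V E v > 2 ^ (k - 1) + (k - 1)" by linarith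
  then obtain W where "W \<subseteq> V" "card W = Suc (k - 1)" "\<not> wtr_set V E W"
    using not_wtr_set_if_large_degree[OF assms(1) v(1)] by blast
  with wtr \<open>0 < k\<close> show False by simp
qed

end
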